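(* Let $X$ be an irreducible affine variety over $\mathbb{C}$, $\mathcal{F}$ an algebraic foliation on $X$, and $Y\subseteq X$ an irreducible Zariski closed subset. Then for all $f,g\in\mathcal{O}_X$: (1) $\mathrm{ord}_{\mathcal{F},Y}(f+g)\ge\min\{\mathrm{ord}_{\mathcal{F},Y}(f),\mathrm{ord}_{\mathcal{F},Y}(g)\}$, with equality if $\mathrm{ord}_{\mathcal{F},Y}(f)\ne\mathrm{ord}_{\mathcal{F},Y}(g)$; (2) $\mathrm{ord}_{\mathcal{F},Y}(fg)=\mathrm{ord}_{\mathcal{F},Y}(f)+\mathrm{ord}_{\mathcal{F},Y}(g)$ (with the convention that a sum involving $+\infty$ is $+\infty$).
   Context: $\mathcal{O}_X$ is the ring of regular functions on $X$; an algebraic foliation $\mathcal{F}$ is a collection of $\mathbb{C}$-derivations of $\mathcal{O}_X$ stable under Lie bracket; $M_{\mathcal{F}}$ is the $\mathcal{O}_X$-module generated by $\mathcal{F}$. $I_Y$ is the ideal of regular functions vanishing on $Y$. Fix generators $\partial_1,\dots,\partial_r$ of $M_{\mathcal{F}}$; for $I=(i_1,\dots,i_m)\in\{1,\dots,r\}^m$ set $\partial_I=\partial_{i_1}\circ\cdots\circ\partial_{i_m}$, $|I|=m$, with $\partial_\emptyset=\mathrm{id}$ and $|\emptyset|=0$. The contact order is $\mathrm{ord}_{\mathcal{F},Y}(f)=\inf\{|I|:\ \partial_I(f)\notin I_Y\}\in\mathbb{N}\cup\{+\infty\}$; it does not depend on the choice of generators. *)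

theory Defs
  imports Complex_Main "HOL-Library.Extended_Nat"
begin

text \<open>The coordinate ring O_X is modelled as a type 'a of class idom (X irreducible,
so O_X is an integral domain), equipped with a ring homomorphism emb from the complex
numbers (the C-algebra structure), and assumed finitely generated as a C-algebra.\<close>

definition complex_algebra :: "(complex \<Rightarrow> 'a::comm_ring_1) \<Rightarrow> bool" where
  "complex_algebra emb \<longleftrightarrow> emb 1 = 1 \<and> (\<forall>a b. emb (a + b) = emb a + emb b)
     \<and> (\<forall>a b. emb (a * b) = emb a * emb b)"

inductive_set alg_gen :: "(complex \<Rightarrow> 'a::comm_ring_1) \<Rightarrow> 'a set \<Rightarrow> 'a set"
  for emb :: "complex \<Rightarrow> 'a" and G :: "'a set" where
  gen: "x \<in> G \<Longrightarrow> x \<in> alg_gen emb G"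
| scal: "emb c \<in> alg_gen emb G"
| add: "x \<in> alg_gen emb G \<Longrightarrow> y \<in> alg_gen emb G \<Longrightarrow> x + y \<in> alg_gen emb G"
| mult: "x \<in> alg_gen emb G \<Longrightarrow> y \<in> alg_gen emb G \<Longrightarrow> x * y \<in> alg_gen emb G"

definition finitely_generated_alg :: "(complex \<Rightarrow> 'a::comm_ring_1) \<Rightarrow> bool" where
  "finitely_generated_alg emb \<longleftrightarrow> (\<exists>G. finite G \<and> alg_gen emb G = UNIV)"

definition is_derivation :: "(complex \<Rightarrow> 'a::comm_ring_1) \<Rightarrow> ('a \<Rightarrow> 'a) \<Rightarrow> bool" where
  "is_derivation emb D \<longleftrightarrow> (\<forall>x y. D (x + y) = D x + D y)
     \<and> (\<forall>c x. D (emb c * x) = emb c * D x)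
     \<and> (\<forall>x y. D (x * y) = x * D y + y * D x)"

definition lie_bracket :: "('a::comm_ring_1 \<Rightarrow> 'a) \<Rightarrow> ('a \<Rightarrow> 'a) \<Rightarrow> 'a \<Rightarrow> 'a" where
  "lie_bracket D E = (\<lambda>x. D (E x) - E (D x))"

definition foliation :: "(complex \<Rightarrow> 'a::comm_ring_1) \<Rightarrow> ('a \<Rightarrow> 'a) set \<Rightarrow> bool" where
  "foliation emb F \<longleftrightarrow> (\<forall>D\<in>F. is_derivation emb D)
     \<and> (\<forall>D\<in>F. \<forall>E\<in>F. lie_bracket D E \<in> F)"

inductive_set mod_span :: "('a::comm_ring_1 \<Rightarrow> 'a) set \<Rightarrow> ('a \<Rightarrow> 'a) set"
  for F :: "('a \<Rightarrow> 'a) set" where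
  zero: "(\<lambda>x. 0) \<in> mod_span F"
| smul: "D \<in> F \<Longrightarrow> (\<lambda>x. a * D x) \<in> mod_span F"
| add: "D \<in> mod_span F \<Longrightarrow> E \<in> mod_span F \<Longrightarrow> (\<lambda>x. D x + E x) \<in> mod_span F"

text \<open>Points of X = C-algebra homomorphisms O_X -> C.\<close>
definition is_point :: "(complex \<Rightarrow> 'a::comm_ring_1) \<Rightarrow> ('a \<Rightarrow> complex) \<Rightarrow> bool" where
  "is_point emb p \<longleftrightarrow> (\<forall>x y. p (x + y) = p x + p y) \<and> (\<forall>x y. p (x * y) = p x * p y)
     \<and> (\<forall>c. p (emb c) = c)"

definition zariski_closed :: "(complex \<Rightarrow> 'a::comm_ring_1) \<Rightarrow> ('a \<Rightarrow> complex) set \<Rightarrow> bool" where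
  "zariski_closed emb Y \<longleftrightarrow> (\<exists>S. Y = {p. is_point emb p \<and> (\<forall>f\<in>S. p f = 0)})"

definition irreducible_closed :: "(complex \<Rightarrow> 'a::comm_ring_1) \<Rightarrow> ('a \<Rightarrow> complex) set \<Rightarrow> bool" where
  "irreducible_closed emb Y \<longleftrightarrow> zariski_closed emb Y \<and> Y \<noteq> {}
     \<and> (\<forall>Z1 Z2. zariski_closed emb Z1 \<longrightarrow> zariski_closed emb Z2 \<longrightarrow> Y \<subseteq> Z1 \<union> Z2
          \<longrightarrow> Y \<subseteq> Z1 \<or> Y \<subseteq> Z2)"

definition vanishing_ideal :: "('a \<Rightarrow> complex) set \<Rightarrow> 'a set" where
  "vanishing_ideal Y = {f. \<forall>p\<in>Y. p f = 0}"

definition dcomp :: "('a \<Rightarrow> 'a) list \<Rightarrow> nat list \<Rightarrow> 'a \<Rightarrow> 'a" where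
  "dcomp ds w = foldr (\<lambda>i h. (ds ! i) \<circ> h) w id"

text \<open>Contact order w.r.t. the generators ds of M_F and the ideal I (Inf {} = infinity).\<close>
definition contact_ord :: "('a \<Rightarrow> 'a) list \<Rightarrow> 'a set \<Rightarrow> 'a \<Rightarrow> enat" where
  "contact_ord ds I f = Inf {enat (length w) | w. set w \<subseteq> {..<length ds} \<and> dcomp ds w f \<notin> I}"

end

theory Submission
  imports Defs
begin

(* Write "h vanishes to order n" when every composite of fewer than n generators maps h into
   P = I_Y, a prime ideal containing no positive integer. Additivity of the derivations gives the
   ultrametric inequality, and the Leibniz rule gives ord(fg) >= ord f + ord g. For the reverse
   bound, with ord f = a > 0 and ord g = b, pick a generator D lowering ord f by one, and let
   d >= 1 and e be maximal with ord(D^d f) = a - d and ord(D^e g) = b - e. In the binomial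
   expansion of D^(d+e)(fg) every term but the one containing D^d f * D^e g vanishes to order
   > (a - d) + (b - e), while that term has exactly this order by induction on a + b (its
   binomial coefficient is a unit modulo P); hence ord(fg) <= a + b. *)

locale ring_derivation =
  fixes D :: "'a::comm_ring_1 \<Rightarrow> 'a"
  assumes add: "D (x + y) = D x + D y"
    and mult: "D (x * y) = x * D y + y * D x"
begin

lemma zero: "D 0 = 0"
  using add[of 0 0] by simp

lemma minus: "D (- x) = - D x"
  using add[of x "- x"] by (simp add: zero add.commute eq_neg_iff_add_eq_0)

lemma diff: "D (x - y) = D x - D y"
  using add[of x "- y"] by (simp add: minus)

lemma sum: "D (sum h S) = (\<Sum>k\<in>S. D (h k))"
  by (induction S rule: infinite_finite_induct) (simp_all add: zero add)

lemma of_nat_mult: "D (of_nat c * x) = of_nat c * D x"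
  by (induction c) (simp_all add: zero add distrib_right)

lemma funpow_mult:
  "(D ^^ m) (x * y) = (\<Sum>k\<le>m. of_nat (m choose k) * ((D ^^ k) x * (D ^^ (m - k)) y))"
proof (induction m)
  case 0
  show ?case by simp
next
  case (Suc m)
  let ?A = "\<lambda>k. (D ^^ k) x" and ?B = "\<lambda>k. (D ^^ k) y"
  have "(D ^^ Suc m) (x * y)
      = (\<Sum>k\<le>m. of_nat (m choose k) * (?A (Suc k) * ?B (m - k)))
      + (\<Sum>k\<le>m. of_nat (m choose k) * (?A k * ?B (Suc m - k)))"
    unfolding funpow.simps(2) o_apply Suc.IH sum of_nat_mult
    by (simp add: mult algebra_simps sum.distrib Suc_diff_le)
  also have "(\<Sum>k\<le>m. of_nat (m choose k) * (?A k * ?B (Suc m - k)))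
      = ?A 0 * ?B (Suc m) + (\<Sum>k\<le>m. of_nat (m choose Suc k) * (?A (Suc k) * ?B (m - k)))"
  proof -
    have "(\<Sum>k\<le>m. of_nat (m choose k) * (?A k * ?B (Suc m - k)))
        = (\<Sum>k\<le>Suc m. of_nat (m choose k) * (?A k * ?B (Suc m - k)))"
      by (simp add: binomial_eq_0)
    then show ?thesis
      by (simp only: sum.atMost_Suc_shift) simp
  qed
  also have "(\<Sum>k\<le>m. of_nat (m choose k) * (?A (Suc k) * ?B (m - k))) + (?A 0 * ?B (Suc m)
      + (\<Sum>k\<le>m. of_nat (m choose Suc k) * (?A (Suc k) * ?B (m - k))))
      = (\<Sum>k\<le>Suc m. of_nat (Suc m choose k) * (?A k * ?B (Suc m - k)))"
    by (simp only: sum.atMost_Suc_shift) (simp add: algebra_simps sum.distrib)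
  finally show ?case .
qed

end

lemma enat_le_iff_lower_bounds: "(x::enat) \<le> y \<longleftrightarrow> (\<forall>n. enat n \<le> x \<longrightarrow> enat n \<le> y)"
proof
  assume bounds: "\<forall>n. enat n \<le> x \<longrightarrow> enat n \<le> y"
  show "x \<le> y"
  proof (cases x)
    case infinity
    then have "\<forall>n. enat n \<le> y" using bounds by simp
    then have "y = \<infinity>"
      by (metis Suc_n_not_le_n enat_ord_simps(1) not_infinity_eq)
    then show ?thesis by simp
  qed (use bounds in simp)
qed (meson order_trans)

lemma dcomp_Nil [simp]: "dcomp ds [] = id"
  by (simp add: dcomp_def)

lemma dcomp_Cons [simp]: "dcomp ds (i # w) = ds ! i \<circ> dcomp ds w"
  by (simp add: dcomp_def)

lemma dcomp_append [simp]: "dcomp ds (u @ v) = dcomp ds u \<circ> dcomp ds v"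
  by (induction u) auto

locale derivations_at_prime =
  fixes ds :: "('a::comm_ring_1 \<Rightarrow> 'a) list" and P :: "'a set"
  assumes derivation: "D \<in> set ds \<Longrightarrow> ring_derivation D"
    and zero_mem: "0 \<in> P"
    and add_mem: "x \<in> P \<Longrightarrow> y \<in> P \<Longrightarrow> x + y \<in> P"
    and mult_mem: "x \<in> P \<Longrightarrow> y * x \<in> P"
    and prime: "x * y \<in> P \<Longrightarrow> x \<in> P \<or> y \<in> P"
    and of_nat_not_mem: "0 < N \<Longrightarrow> of_nat N \<notin> P"
begin

abbreviation ord :: "'a \<Rightarrow> enat" where
  "ord \<equiv> contact_ord ds P"

definition vanishes_to :: "nat \<Rightarrow> 'a \<Rightarrow> bool" where
  "vanishes_to n h \<longleftrightarrow>
     (\<forall>w. set w \<subseteq> {..<length ds} \<longrightarrow> length w < n \<longrightarrow> dcomp ds w h \<in> P)"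

lemma nth_derivation: "i < length ds \<Longrightarrow> ring_derivation (ds ! i)"
  by (simp add: derivation)

lemma dcomp_zero: "set w \<subseteq> {..<length ds} \<Longrightarrow> dcomp ds w 0 = 0"
  by (induction w) (auto simp: ring_derivation.zero[OF nth_derivation])

lemma dcomp_diff:
  "set w \<subseteq> {..<length ds} \<Longrightarrow> dcomp ds w (x - y) = dcomp ds w x - dcomp ds w y"
  by (induction w) (auto simp: ring_derivation.diff[OF nth_derivation])

lemma dcomp_add:
  "set w \<subseteq> {..<length ds} \<Longrightarrow> dcomp ds w (x + y) = dcomp ds w x + dcomp ds w y"
  by (induction w) (auto simp: ring_derivation.add[OF nth_derivation])

lemma dcomp_of_nat_mult:
  "set w \<subseteq> {..<length ds} \<Longrightarrow> dcomp ds w (of_nat c * x) = of_nat c * dcomp ds w x"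
  by (induction w) (auto simp: ring_derivation.of_nat_mult[OF nth_derivation])

lemma diff_mem: "x \<in> P \<Longrightarrow> y \<in> P \<Longrightarrow> x - y \<in> P"
  using add_mem[of x "- y"] mult_mem[of y "- 1"] by simp

lemma vanishes_to_0 [simp]: "vanishes_to 0 h"
  by (simp add: vanishes_to_def)

lemma vanishes_to_zero [simp]: "vanishes_to n 0"
  by (simp add: vanishes_to_def dcomp_zero zero_mem)

lemma vanishes_to_mono: "vanishes_to n h \<Longrightarrow> m \<le> n \<Longrightarrow> vanishes_to m h"
  by (auto simp: vanishes_to_def)

lemma vanishes_to_add: "vanishes_to n x \<Longrightarrow> vanishes_to n y \<Longrightarrow> vanishes_to n (x + y)"
  by (simp add: vanishes_to_def dcomp_add add_mem)

lemma vanishes_to_diff: "vanishes_to n x \<Longrightarrow> vanishes_to n y \<Longrightarrow> vanishes_to n (x - y)"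
  by (simp add: vanishes_to_def dcomp_diff diff_mem)

lemma vanishes_to_sum: "(\<And>k. k \<in> S \<Longrightarrow> vanishes_to n (h k)) \<Longrightarrow> vanishes_to n (sum h S)"
  by (induction S rule: infinite_finite_induct) (simp_all add: vanishes_to_add)

lemma vanishes_to_Suc_iff:
  "vanishes_to (Suc n) h \<longleftrightarrow> h \<in> P \<and> (\<forall>D\<in>set ds. vanishes_to n (D h))"
proof
  assume h: "vanishes_to (Suc n) h"
  have "vanishes_to n ((ds ! i) h)" if "i < length ds" for i
    unfolding vanishes_to_def
  proof (intro allI impI)
    fix w assume "set w \<subseteq> {..<length ds}" "length w < n"
    with that have "dcomp ds (w @ [i]) h \<in> P"
      using h[unfolded vanishes_to_def, rule_format, of "w @ [i]"] by simp
    then show "dcomp ds w ((ds ! i) h) \<in> P" by simp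
  qed
  moreover have "h \<in> P"
    using h[unfolded vanishes_to_def, rule_format, of "[]"] by simp
  ultimately show "h \<in> P \<and> (\<forall>D\<in>set ds. vanishes_to n (D h))"
    by (auto simp: in_set_conv_nth)
next
  assume h: "h \<in> P \<and> (\<forall>D\<in>set ds. vanishes_to n (D h))"
  show "vanishes_to (Suc n) h"
    unfolding vanishes_to_def
  proof (intro allI impI)
    fix w assume w: "set w \<subseteq> {..<length ds}" "length w < Suc n"
    show "dcomp ds w h \<in> P"
    proof (cases w rule: rev_cases)
      case Nil
      then show ?thesis using h by simp
    next
      case (snoc u i)
      with w have "vanishes_to n ((ds ! i) h)" "set u \<subseteq> {..<length ds}" "length u < n"
        using h by auto
      then show ?thesis using snoc by (simp add: vanishes_to_def)
    qed
  qed
qed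

lemma vanishes_to_funpow:
  assumes "D \<in> set ds" "vanishes_to n h"
  shows "vanishes_to (n - k) ((D ^^ k) h)"
proof (induction k)
  case 0
  show ?case using assms(2) by simp
next
  case (Suc k)
  show ?case
  proof (cases "n - k")
    case (Suc m)
    then have "n - Suc k = m" by simp
    then show ?thesis using Suc Suc.IH assms(1) by (simp add: vanishes_to_Suc_iff)
  qed simp
qed

lemma vanishes_to_mult: "vanishes_to a f \<Longrightarrow> vanishes_to b g \<Longrightarrow> vanishes_to (a + b) (f * g)"
proof (induction "a + b" arbitrary: a b f g rule: less_induct)
  case less
  show ?case
  proof (cases "a + b")
    case (Suc m)
    have half: "vanishes_to m (x * D y)"
      if "vanishes_to a' x" "vanishes_to b' y" "a' + b' = a + b" "D \<in> set ds" for a' b' x y D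
    proof (cases b')
      case 0
      then have "vanishes_to m x" using that Suc vanishes_to_mono by simp
      then show ?thesis using less.hyps[of m 0] Suc by simp
    next
      case (Suc b'')
      then have "vanishes_to b'' (D y)" using that by (simp add: vanishes_to_Suc_iff)
      then show ?thesis using less.hyps[of a' b''] that Suc \<open>a + b = Suc m\<close> by simp
    qed
    have "f * g \<in> P"
    proof (cases a)
      case 0
      then show ?thesis using less.prems Suc mult_mem by (simp add: vanishes_to_Suc_iff)
    next
      case (Suc a')
      then show ?thesis using less.prems mult_mem[of f g] by (simp add: vanishes_to_Suc_iff mult.commute)
    qed
    moreover have "vanishes_to m (D (f * g))" if "D \<in> set ds" for D
      using half[OF less.prems(1,2) refl that] half[OF less.prems(2,1) _ that]
      by (simp add: ring_derivation.mult[OF derivation[OF that]] vanishes_to_add add.commute)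
    ultimately show ?thesis using Suc by (simp add: vanishes_to_Suc_iff)
  qed simp
qed

lemma enat_le_ord_iff: "enat n \<le> ord h \<longleftrightarrow> vanishes_to n h"
  unfolding contact_ord_def le_Inf_iff vanishes_to_def
  by (auto simp: Ball_def) (metis enat_ord_simps(1) not_le)

lemma ord_eq_enat_iff: "ord h = enat n \<longleftrightarrow> vanishes_to n h \<and> \<not> vanishes_to (Suc n) h"
  by (cases "ord h") (auto simp flip: enat_le_ord_iff)

lemma ord_eq_0_iff: "ord h = 0 \<longleftrightarrow> h \<notin> P"
  by (simp add: zero_enat_def ord_eq_enat_iff vanishes_to_Suc_iff)

lemma ord_eq_infinity_iff: "ord h = \<infinity> \<longleftrightarrow> (\<forall>n. vanishes_to n h)"
  using enat_le_iff_lower_bounds[of \<infinity> "ord h"]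
  by (simp add: enat_le_ord_iff top_unique flip: top_enat_def)

lemma min_ord_le_ord_add: "min (ord f) (ord g) \<le> ord (f + g)"
  by (subst enat_le_iff_lower_bounds) (simp add: enat_le_ord_iff vanishes_to_add)

lemma ord_add_eq_left:
  assumes "ord f < ord g"
  shows "ord (f + g) = ord f"
proof -
  obtain a where a: "ord f = enat a"
    using assms by (cases "ord f") auto
  then have g: "vanishes_to (Suc a) g"
    using assms by (simp flip: enat_le_ord_iff add: Suc_ile_eq)
  have f: "vanishes_to a f" "\<not> vanishes_to (Suc a) f"
    using a by (simp_all add: ord_eq_enat_iff)
  have "vanishes_to a (f + g)"
    using f(1) g vanishes_to_add vanishes_to_mono le_SucI by blast
  moreover have "\<not> vanishes_to (Suc a) (f + g)"
  proof
    assume "vanishes_to (Suc a) (f + g)"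
    then have "vanishes_to (Suc a) (f + g - g)"
      using g vanishes_to_diff by blast
    then show False
      using f(2) by simp
  qed
  ultimately show ?thesis
    unfolding a by (simp add: ord_eq_enat_iff)
qed

lemma ord_of_nat_mult:
  assumes "0 < c"
  shows "ord (of_nat c * x) = ord x"
proof -
  have "of_nat c * y \<in> P \<longleftrightarrow> y \<in> P" for y
    using prime[of "of_nat c" y] of_nat_not_mem[OF assms] mult_mem by blast
  then show ?thesis
    unfolding contact_ord_def by (simp add: dcomp_of_nat_mult cong: conj_cong)
qed

lemma exists_direction:
  assumes "ord h = enat (Suc n)"
  obtains D where "D \<in> set ds" "ord (D h) = enat n"
  using assms by (auto simp: ord_eq_enat_iff vanishes_to_Suc_iff)

lemma exists_leading_power:
  assumes D: "D \<in> set ds" and h: "vanishes_to a h"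
    and k: "k \<le> a" "ord ((D ^^ k) h) = enat (a - k)"
  obtains d where "k \<le> d" "d \<le> a" "ord ((D ^^ d) h) = enat (a - d)"
    "vanishes_to (a - d) ((D ^^ Suc d) h)"
proof -
  define Q where "Q j \<longleftrightarrow> j \<le> a \<and> ord ((D ^^ j) h) = enat (a - j)" for j
  obtain d where "Q d" and greatest: "\<And>j. Q j \<Longrightarrow> j \<le> d"
    using Nat.ex_has_greatest_nat[of Q k a] k by (auto simp: Q_def)
  have "vanishes_to (a - d) ((D ^^ Suc d) h)"
  proof (cases "d < a")
    case True
    have "\<not> Q (Suc d)"
      using greatest by fastforce
    moreover have "vanishes_to (a - Suc d) ((D ^^ Suc d) h)"
      using vanishes_to_funpow[OF D h] .
    ultimately show ?thesis
      using True by (simp add: Q_def ord_eq_enat_iff Suc_diff_Suc)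
  qed (use \<open>Q d\<close> Q_def in simp)
  moreover have "k \<le> d"
    using greatest k by (simp add: Q_def)
  ultimately show thesis
    using that \<open>Q d\<close> Q_def by blast
qed

lemma vanishes_to_below_leading_term:
  assumes D: "D \<in> set ds" and "k < d" "d \<le> a"
    and f: "vanishes_to a f" and g: "vanishes_to (b - e) ((D ^^ Suc e) g)"
  shows "vanishes_to (Suc ((a - d) + (b - e))) ((D ^^ k) f * (D ^^ (d + e - k)) g)"
proof -
  have "d + e - k = (d - Suc k) + Suc e"
    using \<open>k < d\<close> by simp
  then have "(D ^^ (d + e - k)) g = (D ^^ (d - Suc k)) ((D ^^ Suc e) g)"
    by (simp only: funpow_add o_apply)
  then have "vanishes_to (b - e - (d - Suc k)) ((D ^^ (d + e - k)) g)"
    using vanishes_to_funpow[OF D g] by simp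
  then have "vanishes_to ((a - k) + (b - e - (d - Suc k))) ((D ^^ k) f * (D ^^ (d + e - k)) g)"
    using vanishes_to_mult vanishes_to_funpow[OF D f] by blast
  then show ?thesis
    by (rule vanishes_to_mono) (use assms in linarith)
qed

lemma ord_funpow_mult_leading_term:
  assumes D: "D \<in> set ds"
    and f: "d \<le> a" "vanishes_to a f" "vanishes_to (a - d) ((D ^^ Suc d) f)"
    and g: "e \<le> b" "vanishes_to b g" "vanishes_to (b - e) ((D ^^ Suc e) g)"
    and leading: "ord ((D ^^ d) f * (D ^^ e) g) = enat ((a - d) + (b - e))"
  shows "ord ((D ^^ (d + e)) (f * g)) = enat ((a - d) + (b - e))"
proof -
  define n where "n = (a - d) + (b - e)"
  define T where "T k = of_nat (d + e choose k) * ((D ^^ k) f * (D ^^ (d + e - k)) g)" for k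
  have "vanishes_to (Suc n) (T k)" if "k \<le> d + e" "k \<noteq> d" for k
  proof -
    have "vanishes_to (Suc n) ((D ^^ k) f * (D ^^ (d + e - k)) g)"
    proof (cases "k < d")
      case True
      then show ?thesis
        unfolding n_def using vanishes_to_below_leading_term D f g by blast
    next
      case False
      then have "d + e - k < e" "e + d - (d + e - k) = k"
        using that by auto
      then have "vanishes_to (Suc n) ((D ^^ (d + e - k)) g * (D ^^ k) f)"
        unfolding n_def using vanishes_to_below_leading_term[OF D _ g(1,2) f(3)]
        by (metis add.commute)
      then show ?thesis
        by (simp add: mult.commute)
    qed
    then show ?thesis
      unfolding T_def using vanishes_to_mult[of 0] by fastforce
  qed
  then have "vanishes_to (Suc n) (\<Sum>k\<in>{..d + e} - {d}. T k)"
    by (intro vanishes_to_sum) auto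
  then have "enat n < ord (\<Sum>k\<in>{..d + e} - {d}. T k)"
    by (simp flip: Suc_ile_eq enat_le_ord_iff)
  moreover have "ord (T d) = enat n"
    using leading by (simp add: T_def ord_of_nat_mult n_def)
  moreover have "(D ^^ (d + e)) (f * g) = T d + (\<Sum>k\<in>{..d + e} - {d}. T k)"
    unfolding ring_derivation.funpow_mult[OF derivation[OF D]] T_def
    by (simp add: sum.remove[of _ d])
  ultimately show ?thesis
    unfolding n_def by (metis ord_add_eq_left)
qed

lemma ord_mult_enat_step:
  assumes IH: "\<And>a' b' f' g'. a' + b' < a + b \<Longrightarrow> ord f' = enat a' \<Longrightarrow> ord g' = enat b'
      \<Longrightarrow> ord (f' * g') = enat (a' + b')"
    and "0 < a" and f: "ord f = enat a" and g: "ord g = enat b"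
  shows "ord (f * g) = enat (a + b)"
proof -
  have vf: "vanishes_to a f" and vg: "vanishes_to b g"
    using f g by (simp_all add: ord_eq_enat_iff)
  obtain D where D: "D \<in> set ds" "ord (D f) = enat (a - 1)"
    using exists_direction f \<open>0 < a\<close> by (metis Suc_pred')
  obtain d where d: "1 \<le> d" "d \<le> a" "ord ((D ^^ d) f) = enat (a - d)"
      "vanishes_to (a - d) ((D ^^ Suc d) f)"
    using exists_leading_power[OF D(1) vf, of 1] D(2) \<open>0 < a\<close> by auto
  obtain e where e: "e \<le> b" "ord ((D ^^ e) g) = enat (b - e)"
      "vanishes_to (b - e) ((D ^^ Suc e) g)"
    using exists_leading_power[OF D(1) vg, of 0] g by auto
  have "ord ((D ^^ d) f * (D ^^ e) g) = enat ((a - d) + (b - e))"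
    using IH[OF _ d(3) e(2)] d(1,2) e(1) by linarith
  then have "ord ((D ^^ (d + e)) (f * g)) = enat ((a - d) + (b - e))"
    using ord_funpow_mult_leading_term[OF D(1)] d e vf vg by blast
  then have "\<not> vanishes_to (Suc (a + b) - (d + e)) ((D ^^ (d + e)) (f * g))"
    using d e by (simp add: ord_eq_enat_iff Suc_diff_le)
  then have "\<not> vanishes_to (Suc (a + b)) (f * g)"
    using vanishes_to_funpow[OF D(1)] by blast
  then show ?thesis
    using vanishes_to_mult[OF vf vg] by (simp add: ord_eq_enat_iff)
qed

lemma ord_mult_enat: "ord f = enat a \<Longrightarrow> ord g = enat b \<Longrightarrow> ord (f * g) = enat (a + b)"
proof (induction "a + b" arbitrary: a b f g rule: less_induct)
  case less
  have IH: "\<And>a' b' f' g'. a' + b' < a + b \<Longrightarrow> ord f' = enat a' \<Longrightarrow> ord g' = enat b'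
      \<Longrightarrow> ord (f' * g') = enat (a' + b')"
    using less.hyps by blast
  consider "0 < a" | "0 < b" | "a = 0" "b = 0"
    by blast
  then show ?case
  proof cases
    case 1
    show ?thesis
      by (rule ord_mult_enat_step[OF _ 1 less.prems]) (use IH in blast)
  next
    case 2
    have "ord (g * f) = enat (b + a)"
      by (rule ord_mult_enat_step[OF _ 2 less.prems(2,1)]) (use IH in \<open>simp add: add.commute\<close>)
    then show ?thesis
      by (simp add: mult.commute add.commute)
  next
    case 3
    then have "f \<notin> P" "g \<notin> P"
      using less.prems by (simp_all add: ord_eq_0_iff flip: zero_enat_def)
    then show ?thesis
      using 3 prime by (auto simp: ord_eq_0_iff simp flip: zero_enat_def)
  qed
qed

lemma ord_mult: "ord (f * g) = ord f + ord g"
proof (cases "ord f = \<infinity> \<or> ord g = \<infinity>")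
  case True
  then have "vanishes_to n (f * g)" for n
    using vanishes_to_mult[of n f 0 g] vanishes_to_mult[of 0 f n g]
    by (auto simp: ord_eq_infinity_iff)
  then have "ord (f * g) = \<infinity>"
    by (simp add: ord_eq_infinity_iff)
  then show ?thesis
    using True by auto
next
  case False
  then obtain a b where "ord f = enat a" "ord g = enat b"
    by auto
  then show ?thesis
    by (simp add: ord_mult_enat)
qed

end

lemma ring_derivation_if_is_derivation: "is_derivation emb D \<Longrightarrow> ring_derivation D"
  by unfold_locales (simp_all add: is_derivation_def)

lemma mod_span_ring_derivation:
  assumes "foliation emb F" "D \<in> mod_span F"
  shows "ring_derivation D"
  using assms(2)
proof (induction rule: mod_span.induct)
  case zero
  show ?case by unfold_locales simp_all
next
  case (smul D a)
  then interpret ring_derivation D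
    using assms(1) ring_derivation_if_is_derivation by (auto simp: foliation_def)
  show ?case by unfold_locales (simp_all add: add mult algebra_simps)
next
  case (add D E)
  then show ?case by (simp add: ring_derivation_def algebra_simps)
qed

lemma is_point_zero: "is_point emb p \<Longrightarrow> p 0 = 0"
  unfolding is_point_def by (metis add_cancel_right_right)

lemma is_point_of_nat:
  assumes "complex_algebra emb" "is_point emb p"
  shows "p (of_nat N) = of_nat N"
proof (induction N)
  case 0
  show ?case using is_point_zero[OF assms(2)] by simp
next
  case (Suc N)
  have "p 1 = 1"
    using assms unfolding complex_algebra_def is_point_def by metis
  then show ?case
    using Suc assms(2) by (simp add: is_point_def)
qed

lemma irreducible_closed_is_point: "irreducible_closed emb Y \<Longrightarrow> p \<in> Y \<Longrightarrow> is_point emb p"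
  by (auto simp: irreducible_closed_def zariski_closed_def)

lemma vanishing_ideal_prime:
  assumes "irreducible_closed emb Y" "x * y \<in> vanishing_ideal Y"
  shows "x \<in> vanishing_ideal Y \<or> y \<in> vanishing_ideal Y"
proof -
  let ?V = "\<lambda>h. {p. is_point emb p \<and> (\<forall>f\<in>{h}. p f = 0)}"
  note points = irreducible_closed_is_point[OF assms(1)]
  have "Y \<subseteq> ?V x \<union> ?V y"
  proof
    fix p assume "p \<in> Y"
    then have "p (x * y) = 0"
      using assms(2) by (simp add: vanishing_ideal_def)
    then have "p x * p y = 0"
      using points[OF \<open>p \<in> Y\<close>] by (simp add: is_point_def)
    then show "p \<in> ?V x \<union> ?V y"
      using points[OF \<open>p \<in> Y\<close>] by auto
  qed
  moreover have "zariski_closed emb (?V x)" "zariski_closed emb (?V y)"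
    unfolding zariski_closed_def by blast+
  ultimately have "Y \<subseteq> ?V x \<or> Y \<subseteq> ?V y"
    using assms(1) by (simp add: irreducible_closed_def)
  then show ?thesis
    by (auto simp: vanishing_ideal_def)
qed

lemma derivations_at_prime_vanishing_ideal:
  assumes "complex_algebra emb" "foliation emb F" "set ds \<subseteq> mod_span F"
    and "irreducible_closed emb Y"
  shows "derivations_at_prime ds (vanishing_ideal Y)"
proof (rule derivations_at_prime.intro)
  note points = irreducible_closed_is_point[OF assms(4)]
  have hom: "p (x + y) = p x + p y" "p (x * y) = p x * p y" if "p \<in> Y" for p x y
    using points[OF that] by (simp_all add: is_point_def)
  show "ring_derivation D" if "D \<in> set ds" for D
    using mod_span_ring_derivation assms(2,3) that by blast
  show "0 \<in> vanishing_ideal Y"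
    using points is_point_zero by (auto simp: vanishing_ideal_def)
  show "x + y \<in> vanishing_ideal Y" if "x \<in> vanishing_ideal Y" "y \<in> vanishing_ideal Y" for x y
    using that by (auto simp: vanishing_ideal_def hom)
  show "y * x \<in> vanishing_ideal Y" if "x \<in> vanishing_ideal Y" for x y
    using that by (auto simp: vanishing_ideal_def hom)
  show "x \<in> vanishing_ideal Y \<or> y \<in> vanishing_ideal Y" if "x * y \<in> vanishing_ideal Y" for x y
    using vanishing_ideal_prime assms(4) that by blast
  show "of_nat N \<notin> vanishing_ideal Y" if "0 < N" for N
  proof -
    obtain p where "p \<in> Y"
      using assms(4) by (auto simp: irreducible_closed_def)
    then show ?thesis
      using is_point_of_nat[OF assms(1) points] that by (force simp: vanishing_ideal_def)
  qed
qed

theorem mainTheorem5: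
  fixes emb :: "complex \<Rightarrow> 'a::idom"
    and F :: "('a \<Rightarrow> 'a) set"
    and ds :: "('a \<Rightarrow> 'a) list"
    and Y :: "('a \<Rightarrow> complex) set"
    and f g :: 'a
  assumes "complex_algebra emb"
    and "finitely_generated_alg emb"
    and "foliation emb F"
    and "set ds \<subseteq> mod_span F"
    and "mod_span F \<subseteq> mod_span (set ds)"
    and "irreducible_closed emb Y"
  shows "contact_ord ds (vanishing_ideal Y) (f + g)
           \<ge> min (contact_ord ds (vanishing_ideal Y) f) (contact_ord ds (vanishing_ideal Y) g)
         \<and> (contact_ord ds (vanishing_ideal Y) f \<noteq> contact_ord ds (vanishing_ideal Y) g \<longrightarrow>
              contact_ord ds (vanishing_ideal Y) (f + g)
                = min (contact_ord ds (vanishing_ideal Y) f) (contact_ord ds (vanishing_ideal Y) g))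
         \<and> contact_ord ds (vanishing_ideal Y) (f * g)
           = contact_ord ds (vanishing_ideal Y) f + contact_ord ds (vanishing_ideal Y) g"
proof -
  interpret derivations_at_prime ds "vanishing_ideal Y"
    using derivations_at_prime_vanishing_ideal assms(1,3,4,6) .
  have "ord (f + g) = min (ord f) (ord g)" if "ord f \<noteq> ord g"
    using that ord_add_eq_left[of f g] ord_add_eq_left[of g f]
    by (cases "ord f < ord g") (auto simp: add.commute min_def)
  then show ?thesis
    using min_ord_le_ord_add ord_mult by blast
qed

end
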